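(* Let $\mathcal N$ be an orchard network and let $\mathcal N=\mathcal N_0,\mathcal N_1,\dots,\mathcal N_\ell$ be a maximal cherry-reduction sequence of $\mathcal N$. Then this sequence is complete, i.e. $\mathcal N_\ell$ consists of a single vertex.
   Context: A phylogenetic network on $X$ ($X$ non-empty finite) is a rooted acyclic directed graph with no parallel arcs such that: the unique root has in-degree $0$ and out-degree $2$; every vertex of out-degree $0$ has in-degree $1$, and the set of such vertices (leaves) is $X$; every other vertex has either in-degree $1$ and out-degree $2$ (tree vertex) or in-degree $2$ and out-degree $1$ (reticulation). If $|X|=1$ a single vertex is also allowed. For a $2$-element subset $\{a,b\}\subseteq X$ with parents $p_a,p_b$: $\{a,b\}$ is a cherry if $p_a=p_b$; it is a reticulated cherry with reticulation leaf $b$ if $p_b$ is a reticulation and $(p_a,p_b)$ is an arc. Reducing $b$ in a cherry means deleting $b$ and suppressing the resulting vertex of in-degree 1 and out-degree 1 (if the common parent is the root, delete $b$ and the root, leaving the single vertex $a$). Cutting a reticulated cherry $\{a,b\}$ means deleting the arc $(p_a,p_b)$ and suppressing the two resulting vertices of in-degree 1 and out-degree 1. These are cherry reductions. A cherry-reduction sequence of $\mathcal N$ is a sequence $\mathcal N=\mathcal N_0,\dots,\mathcal N_k$ where each $\mathcal N_i$ is obtained from $\mathcal N_{i-1}$ by one cherry reduction; it is maximal if $\mathcal N_k$ has no cherries and no reticulated cherries, and complete if $\mathcal N_k$ is a single vertex. $\mathcal N$ is an orchard network if it has a complete cherry-reduction sequence. *)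

theory Defs
  imports Main
begin

text \<open>Arcs form a set, so parallel arcs are excluded by construction.  Leaves are
  identified with their labels, so the leaf set X is the set of out-degree-0 vertices.\<close>

type_synonym 'v network = "'v set \<times> ('v \<times> 'v) set"

definition indeg :: "('v \<times> 'v) set \<Rightarrow> 'v \<Rightarrow> nat" where
  "indeg A v = card {u. (u, v) \<in> A}"

definition outdeg :: "('v \<times> 'v) set \<Rightarrow> 'v \<Rightarrow> nat" where
  "outdeg A v = card {w. (v, w) \<in> A}"

definition leaves :: "'v network \<Rightarrow> 'v set" where
  "leaves N = {v \<in> fst N. outdeg (snd N) v = 0}"

definition is_reticulation :: "'v network \<Rightarrow> 'v \<Rightarrow> bool" where
  "is_reticulation N v \<longleftrightarrow> v \<in> fst N \<and> indeg (snd N) v = 2 \<and> outdeg (snd N) v = 1"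

definition is_tree_vertex :: "'v network \<Rightarrow> 'v \<Rightarrow> bool" where
  "is_tree_vertex N v \<longleftrightarrow> v \<in> fst N \<and> indeg (snd N) v = 1 \<and> outdeg (snd N) v = 2"

definition phylo_network :: "'v network \<Rightarrow> bool" where
  "phylo_network N \<longleftrightarrow>
     (let V = fst N; A = snd N in
       finite V \<and> A \<subseteq> V \<times> V \<and>
       ((\<exists>x. V = {x} \<and> A = {}) \<or>
        (acyclic A \<and>
         (\<exists>r \<in> V. indeg A r = 0 \<and> outdeg A r = 2 \<and>
            (\<forall>v \<in> V. v \<noteq> r \<longrightarrow>
               (outdeg A v = 0 \<and> indeg A v = 1) \<or>
               (indeg A v = 1 \<and> outdeg A v = 2) \<or>
               (indeg A v = 2 \<and> outdeg A v = 1))))))"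

definition parent :: "'v network \<Rightarrow> 'v \<Rightarrow> 'v" where
  "parent N v = (THE p. (p, v) \<in> snd N)"

definition is_cherry :: "'v network \<Rightarrow> 'v \<Rightarrow> 'v \<Rightarrow> bool" where
  "is_cherry N a b \<longleftrightarrow> a \<noteq> b \<and> a \<in> leaves N \<and> b \<in> leaves N \<and> parent N a = parent N b"

definition is_ret_cherry :: "'v network \<Rightarrow> 'v \<Rightarrow> 'v \<Rightarrow> bool" where
  "is_ret_cherry N a b \<longleftrightarrow> a \<noteq> b \<and> a \<in> leaves N \<and> b \<in> leaves N \<and>
     is_reticulation N (parent N b) \<and> (parent N a, parent N b) \<in> snd N"

definition suppress :: "'v network \<Rightarrow> 'v \<Rightarrow> 'v network" where
  "suppress N u = (fst N - {u},
     {(x, y). (x, y) \<in> snd N \<and> x \<noteq> u \<and> y \<noteq> u} \<union>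
     {(p, c). (p, u) \<in> snd N \<and> (u, c) \<in> snd N})"

definition delete_vertices :: "'v network \<Rightarrow> 'v set \<Rightarrow> 'v network" where
  "delete_vertices N S = (fst N - S, {(x, y). (x, y) \<in> snd N \<and> x \<notin> S \<and> y \<notin> S})"

definition reduce_cherry :: "'v network \<Rightarrow> 'v \<Rightarrow> 'v network" where
  "reduce_cherry N b =
     (let p = parent N b in
       if indeg (snd N) p = 0 then delete_vertices N {b, p}
       else suppress (delete_vertices N {b}) p)"

definition cut_ret_cherry :: "'v network \<Rightarrow> 'v \<Rightarrow> 'v \<Rightarrow> 'v network" where
  "cut_ret_cherry N a b =
     (let pa = parent N a; pb = parent N b in
       suppress (suppress (fst N, snd N - {(pa, pb)}) pa) pb)"

definition cherry_reduction :: "'v network \<Rightarrow> 'v network \<Rightarrow> bool" where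
  "cherry_reduction N N' \<longleftrightarrow>
     (\<exists>a b. is_cherry N a b \<and> N' = reduce_cherry N b) \<or>
     (\<exists>a b. is_ret_cherry N a b \<and> N' = cut_ret_cherry N a b)"

definition cherry_reduction_seq :: "'v network \<Rightarrow> (nat \<Rightarrow> 'v network) \<Rightarrow> nat \<Rightarrow> bool" where
  "cherry_reduction_seq N Ns k \<longleftrightarrow>
     Ns 0 = N \<and> (\<forall>i < k. cherry_reduction (Ns i) (Ns (Suc i)))"

definition no_cherries :: "'v network \<Rightarrow> bool" where
  "no_cherries N \<longleftrightarrow> \<not> (\<exists>a b. is_cherry N a b) \<and> \<not> (\<exists>a b. is_ret_cherry N a b)"

definition maximal_seq :: "'v network \<Rightarrow> (nat \<Rightarrow> 'v network) \<Rightarrow> nat \<Rightarrow> bool" where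
  "maximal_seq N Ns k \<longleftrightarrow> cherry_reduction_seq N Ns k \<and> no_cherries (Ns k)"

definition single_vertex :: "'v network \<Rightarrow> bool" where
  "single_vertex N \<longleftrightarrow> (\<exists>v. N = ({v}, {}))"

definition complete_seq :: "'v network \<Rightarrow> (nat \<Rightarrow> 'v network) \<Rightarrow> nat \<Rightarrow> bool" where
  "complete_seq N Ns k \<longleftrightarrow> cherry_reduction_seq N Ns k \<and> single_vertex (Ns k)"

definition orchard :: "'v network \<Rightarrow> bool" where
  "orchard N \<longleftrightarrow> phylo_network N \<and> (\<exists>Ns k. complete_seq N Ns k)"

end

theory Submission
  imports Defs "HOL-Combinatorics.Transposition"
begin

text \<open>Cherry reductions are locally confluent up to relabelling: two different reductions of
  the same network either give isomorphic networks (one cherry reduced from its two sides) or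
  reach a common network after one further reduction each.  As in Newman's lemma, induction on
  the length of a complete sequence then shows that every cherry reduction of an orchard network
  is again orchard.  An orchard network without cherries and reticulated cherries admits no
  reduction at all, so its complete sequence is empty and it is a single vertex.\<close>

lemma parent_eqI: "(\<forall>u. (u, v) \<in> snd N \<longleftrightarrow> u = p) \<Longrightarrow> parent N v = p"
  unfolding parent_def by auto

lemma indeg_eq_1I: "(\<forall>u. (u, v) \<in> A \<longleftrightarrow> u = p) \<Longrightarrow> indeg A v = 1"
  unfolding indeg_def by simp

lemma indeg_eq_2I: "(\<forall>u. (u, v) \<in> A \<longleftrightarrow> u = x \<or> u = y) \<Longrightarrow> x \<noteq> y \<Longrightarrow> indeg A v = 2"
  unfolding indeg_def by (simp add: Collect_disj_eq)

lemma outdeg_eq_0I: "(\<forall>w. (v, w) \<notin> A) \<Longrightarrow> outdeg A v = 0"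
  unfolding outdeg_def by simp

lemma outdeg_eq_1I: "(\<forall>w. (v, w) \<in> A \<longleftrightarrow> w = c) \<Longrightarrow> outdeg A v = 1"
  unfolding outdeg_def by simp

lemma suppress_eq:
  assumes "\<forall>u. (u, x) \<in> A \<longleftrightarrow> u = s" and "\<forall>w. (x, w) \<in> A \<longleftrightarrow> w = t"
  shows "suppress (V, A) x = (V - {x}, A - {(s, x), (x, t)} \<union> {(s, t)})"
proof -
  have "{(y, z). (y, z) \<in> A \<and> y \<noteq> x \<and> z \<noteq> x} = A - {(s, x), (x, t)}"
    and "{(y, z). (y, x) \<in> A \<and> (x, z) \<in> A} = {(s, t)}"
    using assms by auto
  then show ?thesis unfolding suppress_def by simp
qed

lemma delete_leaf_eq:
  assumes "\<forall>w. (b, w) \<notin> A" and "\<forall>u. (u, b) \<in> A \<longleftrightarrow> u = p"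
  shows "delete_vertices (V, A) {b} = (V - {b}, A - {(p, b)})"
proof -
  have "{(x, y). (x, y) \<in> A \<and> x \<notin> {b} \<and> y \<notin> {b}} = A - {(p, b)}" using assms by auto
  then show ?thesis unfolding delete_vertices_def by simp
qed

lemma card_Diff_Un_eq:
  assumes "finite S" "D \<subseteq> S" "I \<inter> S = {}" "finite I" "card I = card D"
  shows "card (S - D \<union> I) = card S"
proof -
  have "finite D" using assms(1,2) finite_subset by blast
  have "card (S - D \<union> I) = card (S - D) + card I"
    by (rule card_Un_disjoint) (use assms in auto)
  moreover have "card (S - D) = card S - card D"
    using \<open>finite D\<close> assms(2) by (rule card_Diff_subset)
  moreover have "card D \<le> card S" using assms(1,2) by (rule card_mono)
  ultimately show ?thesis using assms(5) by arith
qed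

lemma outdeg_Diff_Un:
  assumes "finite A" "R \<subseteq> A" "I \<inter> A = {}" "finite I"
    and "card {x. (v, x) \<in> I} = card {x. (v, x) \<in> R}"
  shows "outdeg (A - R \<union> I) v = outdeg A v"
proof -
  have split: "{x. (v, x) \<in> A - R \<union> I} = {x. (v, x) \<in> A} - {x. (v, x) \<in> R} \<union> {x. (v, x) \<in> I}"
    by blast
  have "{x. (v, x) \<in> A} \<subseteq> snd ` A" "{x. (v, x) \<in> I} \<subseteq> snd ` I" by force+
  then have "finite {x. (v, x) \<in> A}" "finite {x. (v, x) \<in> I}"
    using assms(1,4) finite_subset by blast+
  then show ?thesis unfolding outdeg_def split
    by (intro card_Diff_Un_eq) (use assms in auto)
qed

lemma indeg_Diff_Un:
  assumes "finite A" "R \<subseteq> A" "I \<inter> A = {}" "finite I"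
    and "card {x. (x, v) \<in> I} = card {x. (x, v) \<in> R}"
  shows "indeg (A - R \<union> I) v = indeg A v"
proof -
  have split: "{x. (x, v) \<in> A - R \<union> I} = {x. (x, v) \<in> A} - {x. (x, v) \<in> R} \<union> {x. (x, v) \<in> I}"
    by blast
  have "{x. (x, v) \<in> A} \<subseteq> fst ` A" "{x. (x, v) \<in> I} \<subseteq> fst ` I" by force+
  then have "finite {x. (x, v) \<in> A}" "finite {x. (x, v) \<in> I}"
    using assms(1,4) finite_subset by blast+
  then show ?thesis unfolding indeg_def split
    by (intro card_Diff_Un_eq) (use assms in auto)
qed

lemma rtrancl_from_sink: "(w, v) \<in> A\<^sup>* \<Longrightarrow> (\<And>z. (w, z) \<notin> A) \<Longrightarrow> v = w"
  by (erule converse_rtranclE) auto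

text \<open>A cherry whose parent is the root has no grandparent \<open>g\<close>; it is treated separately.\<close>

definition cherry_at :: "'v set \<Rightarrow> ('v \<times> 'v) set \<Rightarrow> 'v \<Rightarrow> 'v \<Rightarrow> 'v \<Rightarrow> 'v \<Rightarrow> bool" where
  "cherry_at V A a b p g \<longleftrightarrow> a \<noteq> b \<and> a \<in> V \<and> b \<in> V \<and> p \<in> V \<and>
     (\<forall>w. (a, w) \<notin> A) \<and> (\<forall>w. (b, w) \<notin> A) \<and>
     (\<forall>u. (u, a) \<in> A \<longleftrightarrow> u = p) \<and> (\<forall>u. (u, b) \<in> A \<longleftrightarrow> u = p) \<and>
     (\<forall>w. (p, w) \<in> A \<longleftrightarrow> w = a \<or> w = b) \<and> (\<forall>u. (u, p) \<in> A \<longleftrightarrow> u = g)"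

definition ret_cherry_at ::
    "'v set \<Rightarrow> ('v \<times> 'v) set \<Rightarrow> 'v \<Rightarrow> 'v \<Rightarrow> 'v \<Rightarrow> 'v \<Rightarrow> 'v \<Rightarrow> 'v \<Rightarrow> bool" where
  "ret_cherry_at V A a b pa pb ga q \<longleftrightarrow> a \<noteq> b \<and> a \<in> V \<and> b \<in> V \<and> pa \<in> V \<and> pb \<in> V \<and>
     (\<forall>w. (a, w) \<notin> A) \<and> (\<forall>w. (b, w) \<notin> A) \<and>
     (\<forall>u. (u, a) \<in> A \<longleftrightarrow> u = pa) \<and> (\<forall>u. (u, b) \<in> A \<longleftrightarrow> u = pb) \<and>
     (\<forall>w. (pa, w) \<in> A \<longleftrightarrow> w = a \<or> w = pb) \<and> (\<forall>u. (u, pa) \<in> A \<longleftrightarrow> u = ga) \<and>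
     (\<forall>u. (u, pb) \<in> A \<longleftrightarrow> u = pa \<or> u = q) \<and> pa \<noteq> q \<and> (\<forall>w. (pb, w) \<in> A \<longleftrightarrow> w = b)"

definition cherry_reduct :: "'v set \<Rightarrow> ('v \<times> 'v) set \<Rightarrow> 'v \<Rightarrow> 'v \<Rightarrow> 'v \<Rightarrow> 'v \<Rightarrow> 'v network" where
  "cherry_reduct V A a b p g = (V - {b, p}, A - {(g, p), (p, a), (p, b)} \<union> {(g, a)})"

definition ret_cherry_reduct ::
    "'v set \<Rightarrow> ('v \<times> 'v) set \<Rightarrow> 'v \<Rightarrow> 'v \<Rightarrow> 'v \<Rightarrow> 'v \<Rightarrow> 'v \<Rightarrow> 'v \<Rightarrow> 'v network" where
  "ret_cherry_reduct V A a b pa pb ga q =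
     (V - {pa, pb}, A - {(ga, pa), (pa, a), (pa, pb), (q, pb), (pb, b)} \<union> {(ga, a), (q, b)})"

lemma cherry_atD:
  assumes "cherry_at V A a b p g"
  shows "a \<noteq> b" "a \<in> V" "b \<in> V" "p \<in> V" "\<And>w. (a, w) \<notin> A" "\<And>w. (b, w) \<notin> A"
    "\<And>u. (u, a) \<in> A \<longleftrightarrow> u = p" "\<And>u. (u, b) \<in> A \<longleftrightarrow> u = p"
    "\<And>w. (p, w) \<in> A \<longleftrightarrow> w = a \<or> w = b" "\<And>u. (u, p) \<in> A \<longleftrightarrow> u = g"
  using assms unfolding cherry_at_def by simp_all

lemma ret_cherry_atD:
  assumes "ret_cherry_at V A a b pa pb ga q"
  shows "a \<noteq> b" "a \<in> V" "b \<in> V" "pa \<in> V" "pb \<in> V" "\<And>w. (a, w) \<notin> A" "\<And>w. (b, w) \<notin> A"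
    "\<And>u. (u, a) \<in> A \<longleftrightarrow> u = pa" "\<And>u. (u, b) \<in> A \<longleftrightarrow> u = pb"
    "\<And>w. (pa, w) \<in> A \<longleftrightarrow> w = a \<or> w = pb" "\<And>u. (u, pa) \<in> A \<longleftrightarrow> u = ga"
    "\<And>u. (u, pb) \<in> A \<longleftrightarrow> u = pa \<or> u = q" "pa \<noteq> q" "\<And>w. (pb, w) \<in> A \<longleftrightarrow> w = b"
  using assms unfolding ret_cherry_at_def by simp_all

lemma cherry_at_distinct:
  assumes "cherry_at V A a b p g"
  shows "a \<noteq> p" "b \<noteq> p" "g \<noteq> p" "g \<noteq> a" "g \<noteq> b"
  using cherry_atD[OF assms] by metis+

lemma ret_cherry_at_distinct:
  assumes "ret_cherry_at V A a b pa pb ga q"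
  shows "a \<noteq> pa" "a \<noteq> pb" "b \<noteq> pa" "b \<noteq> pb" "pa \<noteq> pb" "ga \<noteq> pa" "ga \<noteq> pb"
    "ga \<noteq> a" "ga \<noteq> b" "q \<noteq> pb" "q \<noteq> a" "q \<noteq> b"
  using ret_cherry_atD[OF assms] by metis+

lemma cherry_at_reduce_cherry:
  assumes "cherry_at V A a b p g"
  shows "is_cherry (V, A) a b" and "reduce_cherry (V, A) b = cherry_reduct V A a b p g"
proof -
  note c = cherry_atD[OF assms] and n = cherry_at_distinct[OF assms]
  have parents: "parent (V, A) a = p" "parent (V, A) b = p" by (rule parent_eqI; simp add: c)+
  have "outdeg A a = 0" "outdeg A b = 0" by (rule outdeg_eq_0I; simp add: c)+
  then show "is_cherry (V, A) a b" using c parents unfolding is_cherry_def leaves_def by simp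
  have "indeg A p = 1" by (rule indeg_eq_1I[where p = g]) (simp add: c)
  moreover have "delete_vertices (V, A) {b} = (V - {b}, A - {(p, b)})"
    by (rule delete_leaf_eq) (simp_all add: c)
  moreover have "suppress (V - {b}, A - {(p, b)}) p = cherry_reduct V A a b p g"
    unfolding cherry_reduct_def using c n
    by (subst suppress_eq[where s = g and t = a]) (auto simp: insert_commute)
  ultimately show "reduce_cherry (V, A) b = cherry_reduct V A a b p g"
    using parents unfolding reduce_cherry_def Let_def by simp
qed

lemma ret_cherry_at_cut_ret_cherry:
  assumes "ret_cherry_at V A a b pa pb ga q"
  shows "is_ret_cherry (V, A) a b"
    and "cut_ret_cherry (V, A) a b = ret_cherry_reduct V A a b pa pb ga q"
proof -
  note c = ret_cherry_atD[OF assms] and n = ret_cherry_at_distinct[OF assms]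
  have parents: "parent (V, A) a = pa" "parent (V, A) b = pb" by (rule parent_eqI; simp add: c)+
  have "outdeg A a = 0" "outdeg A b = 0" by (rule outdeg_eq_0I; simp add: c)+
  moreover have "outdeg A pb = 1" by (rule outdeg_eq_1I[where c = b]) (simp add: c)
  moreover have "indeg A pb = 2" by (rule indeg_eq_2I[where x = pa and y = q]) (simp_all add: c)
  ultimately show "is_ret_cherry (V, A) a b"
    using c parents unfolding is_ret_cherry_def leaves_def is_reticulation_def by simp
  have "suppress (V, A - {(pa, pb)}) pa =
      (V - {pa}, A - {(pa, pb)} - {(ga, pa), (pa, a)} \<union> {(ga, a)})"
    by (rule suppress_eq) (use c n in auto)
  moreover have "suppress (V - {pa}, A - {(pa, pb)} - {(ga, pa), (pa, a)} \<union> {(ga, a)}) pb =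
      ret_cherry_reduct V A a b pa pb ga q"
    unfolding ret_cherry_reduct_def using c n
    by (subst suppress_eq[where s = q and t = b]) (auto simp: insert_commute)
  ultimately show "cut_ret_cherry (V, A) a b = ret_cherry_reduct V A a b pa pb ga q"
    using parents unfolding cut_ret_cherry_def Let_def by simp
qed

lemma cherry_at_cherry_reduction: "cherry_at V A a b p g \<Longrightarrow> cherry_reduction (V, A) (cherry_reduct V A a b p g)"
  unfolding cherry_reduction_def using cherry_at_reduce_cherry by metis

lemma ret_cherry_at_cherry_reduction:
  "ret_cherry_at V A a b pa pb ga q \<Longrightarrow> cherry_reduction (V, A) (ret_cherry_reduct V A a b pa pb ga q)"
  unfolding cherry_reduction_def using ret_cherry_at_cut_ret_cherry by metis

lemma cherry_reduction_root_cherry: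
  assumes "r \<noteq> a" "r \<noteq> b" "a \<noteq> b"
  shows "cherry_reduction ({r, a, b}, {(r, a), (r, b)}) ({a}, {})"
proof -
  have parents: "parent ({r, a, b}, {(r, a), (r, b)}) a = r" "parent ({r, a, b}, {(r, a), (r, b)}) b = r"
    by (rule parent_eqI; use assms in auto)+
  have "outdeg {(r, a), (r, b)} a = 0" "outdeg {(r, a), (r, b)} b = 0"
    by (rule outdeg_eq_0I; use assms in auto)+
  then have "is_cherry ({r, a, b}, {(r, a), (r, b)}) a b"
    unfolding is_cherry_def leaves_def using parents assms by simp
  moreover have "indeg {(r, a), (r, b)} r = 0" unfolding indeg_def using assms by simp
  then have "reduce_cherry ({r, a, b}, {(r, a), (r, b)}) b = ({a}, {})"
    unfolding reduce_cherry_def Let_def parents delete_vertices_def using assms by auto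
  ultimately show ?thesis unfolding cherry_reduction_def by metis
qed

definition rooted_network :: "'v set \<Rightarrow> ('v \<times> 'v) set \<Rightarrow> 'v \<Rightarrow> bool" where
  "rooted_network V A r \<longleftrightarrow> finite V \<and> A \<subseteq> V \<times> V \<and> acyclic A \<and> r \<in> V \<and>
     indeg A r = 0 \<and> outdeg A r = 2 \<and>
     (\<forall>v \<in> V. v \<noteq> r \<longrightarrow>
        (outdeg A v = 0 \<and> indeg A v = 1) \<or>
        (indeg A v = 1 \<and> outdeg A v = 2) \<or>
        (indeg A v = 2 \<and> outdeg A v = 1))"

lemma phylo_network_iff:
  "phylo_network (V, A) \<longleftrightarrow> (\<exists>x. V = {x} \<and> A = {}) \<or> (\<exists>r. rooted_network V A r)"
  unfolding phylo_network_def rooted_network_def Let_def fst_conv snd_conv by auto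

lemma phylo_network_cases:
  assumes "phylo_network N"
  obtains (single_vertex) x where "N = ({x}, {})"
    | (rooted) V A r where "N = (V, A)" "rooted_network V A r"
proof (cases N)
  case (Pair V A)
  from assms[unfolded Pair phylo_network_iff] show ?thesis
  proof (elim disjE exE conjE)
    fix x assume "V = {x}" "A = {}"
    then show ?thesis using that(1) Pair by simp
  next
    fix r assume "rooted_network V A r"
    then show ?thesis using that(2) Pair by simp
  qed
qed

lemma single_vertex_irreducible: "\<not> cherry_reduction ({x}, {}) N'"
  unfolding cherry_reduction_def is_cherry_def is_ret_cherry_def leaves_def by auto

lemma rooted_networkD:
  assumes "rooted_network V A r"
  shows "finite V" "A \<subseteq> V \<times> V" "acyclic A" "r \<in> V" "indeg A r = 0" "outdeg A r = 2"
    "\<And>v. v \<in> V \<Longrightarrow> v \<noteq> r \<Longrightarrow>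
       (outdeg A v = 0 \<and> indeg A v = 1) \<or>
       (indeg A v = 1 \<and> outdeg A v = 2) \<or>
       (indeg A v = 2 \<and> outdeg A v = 1)"
  using assms unfolding rooted_network_def by simp_all

lemma rooted_network_finite_arcs: "rooted_network V A r \<Longrightarrow> finite A"
  unfolding rooted_network_def using finite_subset finite_cartesian_product by blast

lemma rooted_network_finite_parents: "rooted_network V A r \<Longrightarrow> finite {u. (u, v) \<in> A}"
proof -
  assume "rooted_network V A r"
  then have "finite (fst ` A)" by (simp add: rooted_network_finite_arcs)
  moreover have "{u. (u, v) \<in> A} \<subseteq> fst ` A" by force
  ultimately show ?thesis by (rule finite_subset[rotated])
qed

lemma rooted_network_finite_children: "rooted_network V A r \<Longrightarrow> finite {w. (v, w) \<in> A}"
proof -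
  assume "rooted_network V A r"
  then have "finite (snd ` A)" by (simp add: rooted_network_finite_arcs)
  moreover have "{w. (v, w) \<in> A} \<subseteq> snd ` A" by force
  ultimately show ?thesis by (rule finite_subset[rotated])
qed

lemma rooted_network_root_no_parent:
  assumes "rooted_network V A r"
  shows "(u, r) \<notin> A"
proof -
  have "card {u. (u, r) \<in> A} = 0" using rooted_networkD(5)[OF assms] unfolding indeg_def .
  then show ?thesis using rooted_network_finite_parents[OF assms] by simp
qed

lemma rooted_network_has_parent:
  assumes "rooted_network V A r" "v \<in> V" "v \<noteq> r"
  obtains u where "(u, v) \<in> A"
proof -
  have "indeg A v \<noteq> 0" using rooted_networkD(7)[OF assms] by auto
  then have "{u. (u, v) \<in> A} \<noteq> {}" unfolding indeg_def by (metis card.empty)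
  then show ?thesis using that by blast
qed

lemma rooted_network_reachable:
  assumes "rooted_network V A r" "v \<in> V"
  shows "(r, v) \<in> A\<^sup>*"
proof -
  have "wf A"
    using rooted_network_finite_arcs[OF assms(1)] rooted_networkD(3)[OF assms(1)]
    by (rule finite_acyclic_wf)
  then show ?thesis using assms(2)
  proof (induction v rule: wf_induct_rule)
    case (less v)
    show ?case
    proof (cases "v = r")
      case False
      then obtain u where u: "(u, v) \<in> A" using rooted_network_has_parent[OF assms(1) less.prems False] by blast
      then have "u \<in> V" using rooted_networkD(2)[OF assms(1)] by blast
      then show ?thesis using less.IH[OF u] u by simp
    qed simp
  qed
qed

lemma rooted_network_leafE:
  assumes "rooted_network V A r" "a \<in> leaves (V, A)"
  obtains p where "a \<in> V" "\<And>w. (a, w) \<notin> A" "\<And>u. (u, a) \<in> A \<longleftrightarrow> u = p" "parent (V, A) a = p"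
proof -
  have a: "a \<in> V" "outdeg A a = 0" using assms(2) unfolding leaves_def by auto
  then have no_child: "\<And>w. (a, w) \<notin> A"
    using rooted_network_finite_children[OF assms(1)] unfolding outdeg_def by auto
  have "a \<noteq> r" using a(2) rooted_networkD(6)[OF assms(1)] by auto
  then have "indeg A a = 1" using rooted_networkD(7)[OF assms(1) a(1)] a(2) by auto
  then obtain p where "{u. (u, a) \<in> A} = {p}"
    unfolding indeg_def by (auto simp: card_1_singleton_iff)
  then have p: "\<forall>u. (u, a) \<in> A \<longleftrightarrow> u = p" by blast
  then have "parent (V, A) a = p" by (intro parent_eqI) simp
  with a(1) no_child p show ?thesis by (intro that) auto
qed

lemma rooted_network_two_children:
  assumes "rooted_network V A r" "(v, x) \<in> A" "(v, y) \<in> A" "x \<noteq> y"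
  shows "\<forall>w. (v, w) \<in> A \<longleftrightarrow> w = x \<or> w = y"
    and "v = r \<or> (\<exists>g. \<forall>u. (u, v) \<in> A \<longleftrightarrow> u = g)"
proof -
  note N = rooted_networkD[OF assms(1)]
  have v: "v \<in> V" using assms(2) N(2) by blast
  have children: "finite {w. (v, w) \<in> A}" by (rule rooted_network_finite_children[OF assms(1)])
  have "card {x, y} \<le> card {w. (v, w) \<in> A}"
    by (rule card_mono[OF children]) (use assms(2,3) in blast)
  then have "outdeg A v \<ge> 2" using assms(4) unfolding outdeg_def by simp
  then have degrees: "v = r \<or> (indeg A v = 1 \<and> outdeg A v = 2)"
    using N(7)[OF v] by linarith
  then have "card {w. (v, w) \<in> A} = card {x, y}" using N(6) assms(4) unfolding outdeg_def by auto
  then have "{x, y} = {w. (v, w) \<in> A}"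
    by (intro card_subset_eq[OF children]) (use assms(2,3) in auto)
  then show "\<forall>w. (v, w) \<in> A \<longleftrightarrow> w = x \<or> w = y" by blast
  show "v = r \<or> (\<exists>g. \<forall>u. (u, v) \<in> A \<longleftrightarrow> u = g)"
  proof (cases "v = r")
    case False
    then have "card {u. (u, v) \<in> A} = 1" using degrees unfolding indeg_def by simp
    then obtain g where "{u. (u, v) \<in> A} = {g}" by (auto simp: card_1_singleton_iff)
    then show ?thesis by blast
  qed simp
qed

lemma rooted_network_reticulationE:
  assumes "is_reticulation (V, A) pb" "(pa, pb) \<in> A" "(pb, b) \<in> A"
  obtains q where "q \<noteq> pa" "\<forall>u. (u, pb) \<in> A \<longleftrightarrow> u = pa \<or> u = q" "\<forall>w. (pb, w) \<in> A \<longleftrightarrow> w = b"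
proof -
  have "card {w. (pb, w) \<in> A} = 1" "card {u. (u, pb) \<in> A} = 2"
    using assms(1) unfolding is_reticulation_def outdeg_def indeg_def by simp_all
  then obtain c x y where c: "{w. (pb, w) \<in> A} = {c}" and xy: "{u. (u, pb) \<in> A} = {x, y}" "x \<noteq> y"
    by (auto simp: card_1_singleton_iff card_2_iff)
  have out: "\<forall>w. (pb, w) \<in> A \<longleftrightarrow> w = b"
    using c assms(3) unfolding set_eq_iff mem_Collect_eq singleton_iff by auto
  have "pa = x \<or> pa = y" using xy(1) assms(2) by blast
  then show ?thesis
  proof
    assume "pa = x" then show ?thesis using that[of y] xy out by blast
  next
    assume "pa = y" then show ?thesis using that[of x] xy out by blast
  qed
qed

section \<open>Classification of cherry reductions\<close>

lemma rooted_network_cherryE: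
  assumes N: "rooted_network V A r" and cherry: "is_cherry (V, A) a b"
  obtains (inner) p g where "cherry_at V A a b p g"
    | (root) "r \<noteq> a" "r \<noteq> b" "a \<noteq> b" "V = {r, a, b}" "A = {(r, a), (r, b)}"
proof -
  have ab: "a \<noteq> b" "a \<in> leaves (V, A)" "b \<in> leaves (V, A)" "parent (V, A) a = parent (V, A) b"
    using cherry unfolding is_cherry_def by auto
  obtain p where a: "a \<in> V" "\<And>w. (a, w) \<notin> A" "\<And>u. (u, a) \<in> A \<longleftrightarrow> u = p" "parent (V, A) a = p"
    using rooted_network_leafE[OF N ab(2)] by blast
  obtain p' where b: "b \<in> V" "\<And>w. (b, w) \<notin> A" "\<And>u. (u, b) \<in> A \<longleftrightarrow> u = p'" "parent (V, A) b = p'"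
    using rooted_network_leafE[OF N ab(3)] by blast
  have "p' = p" using ab(4) a(4) b(4) by simp
  then have arcs: "(p, a) \<in> A" "(p, b) \<in> A" using a(3) b(3) by auto
  have "p \<in> V" using arcs(1) rooted_networkD(2)[OF N] by blast
  have children: "\<forall>w. (p, w) \<in> A \<longleftrightarrow> w = a \<or> w = b"
    by (rule rooted_network_two_children(1)[OF N arcs ab(1)])
  from rooted_network_two_children(2)[OF N arcs ab(1)] show ?thesis
  proof (elim disjE exE)
    fix g assume "\<forall>u. (u, p) \<in> A \<longleftrightarrow> u = g"
    then show ?thesis using inner[of p g] ab(1) a b \<open>p' = p\<close> \<open>p \<in> V\<close> children
      unfolding cherry_at_def by simp
  next
    assume "p = r"
    have "V \<subseteq> {r, a, b}"
    proof
      fix v assume "v \<in> V"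
      then have "(r, v) \<in> A\<^sup>*" by (rule rooted_network_reachable[OF N])
      then show "v \<in> {r, a, b}"
      proof (cases rule: converse_rtranclE)
        case (step w)
        then have "w = a \<or> w = b" using children \<open>p = r\<close> by simp
        then show ?thesis using rtrancl_from_sink[OF step(2)] a(2) b(2) by auto
      qed simp
    qed
    then have "V = {r, a, b}" using a(1) b(1) rooted_networkD(4)[OF N] by blast
    moreover have "A = {(r, a), (r, b)}"
    proof
      show "A \<subseteq> {(r, a), (r, b)}"
      proof (rule subrelI)
        fix u w assume "(u, w) \<in> A"
        moreover from this have "u \<in> {r, a, b}" using rooted_networkD(2)[OF N] \<open>V = {r, a, b}\<close> by blast
        ultimately show "(u, w) \<in> {(r, a), (r, b)}" using a(2) b(2) children \<open>p = r\<close> by blast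
      qed
      show "{(r, a), (r, b)} \<subseteq> A" using arcs \<open>p = r\<close> by simp
    qed
    moreover have "r \<noteq> a" "r \<noteq> b" using arcs a(2) b(2) \<open>p = r\<close> by blast+
    ultimately show ?thesis using root ab(1) by blast
  qed
qed

lemma rooted_network_ret_cherryE:
  assumes N: "rooted_network V A r" and cherry: "is_ret_cherry (V, A) a b"
  obtains pa pb ga q where "ret_cherry_at V A a b pa pb ga q"
proof -
  have ab: "a \<noteq> b" "a \<in> leaves (V, A)" "b \<in> leaves (V, A)"
    "is_reticulation (V, A) (parent (V, A) b)" "(parent (V, A) a, parent (V, A) b) \<in> A"
    using cherry unfolding is_ret_cherry_def by auto
  obtain pa where a: "a \<in> V" "\<And>w. (a, w) \<notin> A" "\<And>u. (u, a) \<in> A \<longleftrightarrow> u = pa" "parent (V, A) a = pa"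
    using rooted_network_leafE[OF N ab(2)] by blast
  obtain pb where b: "b \<in> V" "\<And>w. (b, w) \<notin> A" "\<And>u. (u, b) \<in> A \<longleftrightarrow> u = pb" "parent (V, A) b = pb"
    using rooted_network_leafE[OF N ab(3)] by blast
  have arcs: "(pa, pb) \<in> A" "(pb, b) \<in> A" "(pa, a) \<in> A" using ab(5) a b by simp_all
  obtain q where q: "q \<noteq> pa" "\<forall>u. (u, pb) \<in> A \<longleftrightarrow> u = pa \<or> u = q" "\<forall>w. (pb, w) \<in> A \<longleftrightarrow> w = b"
    using rooted_network_reticulationE[OF _ arcs(1,2)] ab(4) b(4) by metis
  have "a \<noteq> pb" using arcs(2) a(2) by metis
  then have children: "\<forall>w. (pa, w) \<in> A \<longleftrightarrow> w = a \<or> w = pb"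
    by (rule rooted_network_two_children(1)[OF N arcs(3,1)])
  have "pa \<noteq> r"
  proof
    assume "pa = r"
    have "(q, pb) \<in> A" using q by simp
    then have "(r, q) \<in> A\<^sup>*" using rooted_network_reachable[OF N] rooted_networkD(2)[OF N] by blast
    then show False
    proof (cases rule: converse_rtranclE)
      case base then show False using q(1) \<open>pa = r\<close> by simp
    next
      case (step w)
      then have "w = a \<or> w = pb" using children \<open>pa = r\<close> by simp
      then show False
      proof
        assume "w = a"
        then show False using rtrancl_from_sink[OF step(2)] a(2) \<open>(q, pb) \<in> A\<close> by metis
      next
        assume "w = pb"
        then have "(pb, pb) \<in> A\<^sup>+" using step(2) \<open>(q, pb) \<in> A\<close> by simp
        then show False using rooted_networkD(3)[OF N] unfolding acyclic_def by blast
      qed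
    qed
  qed
  then obtain ga where "\<forall>u. (u, pa) \<in> A \<longleftrightarrow> u = ga"
    using rooted_network_two_children(2)[OF N arcs(3,1) \<open>a \<noteq> pb\<close>] by blast
  moreover have "pa \<in> V" "pb \<in> V" using arcs(1) rooted_networkD(2)[OF N] by auto
  ultimately have "ret_cherry_at V A a b pa pb ga q"
    unfolding ret_cherry_at_def using ab(1) a b children q q(1)[symmetric] by simp
  then show ?thesis by (rule that)
qed

lemma cherry_reduction_cases:
  assumes N: "rooted_network V A r" and "cherry_reduction (V, A) N'"
  obtains (cherry) a b p g where "cherry_at V A a b p g" "N' = cherry_reduct V A a b p g"
    | (ret_cherry) a b pa pb ga q
      where "ret_cherry_at V A a b pa pb ga q" "N' = ret_cherry_reduct V A a b pa pb ga q"
    | (root_cherry) a b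
      where "r \<noteq> a" "r \<noteq> b" "a \<noteq> b" "V = {r, a, b}" "A = {(r, a), (r, b)}" "N' = ({a}, {})"
  using assms(2) unfolding cherry_reduction_def
proof (elim disjE exE conjE)
  fix a b assume cherry: "is_cherry (V, A) a b" and N': "N' = reduce_cherry (V, A) b"
  from N cherry show ?thesis
  proof (cases rule: rooted_network_cherryE)
    case (inner p g)
    then show ?thesis using that(1) N' cherry_at_reduce_cherry(2) by metis
  next
    case root
    moreover have "{r, a, b} - {b, r} = {a}" using root by auto
    moreover have "indeg {(r, a), (r, b)} r = 0" unfolding indeg_def using root by simp
    moreover have "parent ({r, a, b}, {(r, a), (r, b)}) b = r" by (rule parent_eqI) (use root in auto)
    ultimately have "N' = ({a}, {})"
      unfolding N' reduce_cherry_def Let_def delete_vertices_def by auto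
    then show ?thesis using that(3) root by blast
  qed
next
  fix a b assume cherry: "is_ret_cherry (V, A) a b" and N': "N' = cut_ret_cherry (V, A) a b"
  from N cherry obtain pa pb ga q where "ret_cherry_at V A a b pa pb ga q"
    by (rule rooted_network_ret_cherryE)
  then show ?thesis using that(2) N' ret_cherry_at_cut_ret_cherry(2) by metis
qed

section \<open>Cherry reductions preserve phylogenetic networks\<close>

lemma rooted_network_degree_preserving:
  assumes N: "rooted_network V A r"
    and "V' \<subseteq> V" "A' \<subseteq> V' \<times> V'" "A' \<subseteq> A\<^sup>+" "r \<in> V'"
    and "\<And>v. v \<in> V' \<Longrightarrow> indeg A' v = indeg A v"
    and "\<And>v. v \<in> V' \<Longrightarrow> outdeg A' v = outdeg A v"
  shows "rooted_network V' A' r"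
proof -
  note d = rooted_networkD[OF N]
  have "finite V'" using d(1) assms(2) finite_subset by blast
  moreover have "acyclic A'"
    using acyclic_subset[OF _ assms(4)] d(3) unfolding acyclic_def by simp
  ultimately show ?thesis
    using assms(2-7) d(4-7) unfolding rooted_network_def by (metis subsetD)
qed

lemma rooted_network_cherry_reduct:
  assumes N: "rooted_network V A r" and c: "cherry_at V A a b p g"
  shows "rooted_network (V - {b, p}) (A - {(g, p), (p, a), (p, b)} \<union> {(g, a)}) r"
proof (rule rooted_network_degree_preserving[OF N])
  note d = cherry_atD[OF c] and n = cherry_at_distinct[OF c]
  have removed: "{(g, p), (p, a), (p, b)} \<subseteq> A" using d by simp
  have added: "{(g, a)} \<inter> A = {}" using d(7) n(3) by auto
  have "g \<in> V" using d(10) rooted_networkD(2)[OF N] by blast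
  then show "A - {(g, p), (p, a), (p, b)} \<union> {(g, a)} \<subseteq> (V - {b, p}) \<times> (V - {b, p})"
    using rooted_networkD(2)[OF N] d n by auto
  have "(g, a) \<in> A\<^sup>+" using removed by (meson insert_subset trancl.simps)
  then show "A - {(g, p), (p, a), (p, b)} \<union> {(g, a)} \<subseteq> A\<^sup>+" by auto
  show "r \<in> V - {b, p}"
    using rooted_networkD(4)[OF N] rooted_network_root_no_parent[OF N] d(8)[of p] d(10)[of g] by auto
  fix v assume v: "v \<in> V - {b, p}"
  show "indeg (A - {(g, p), (p, a), (p, b)} \<union> {(g, a)}) v = indeg A v"
  proof (rule indeg_Diff_Un[OF rooted_network_finite_arcs[OF N] removed added])
    have "{x. (x, v) \<in> {(g, a)}} = (if v = a then {g} else {})"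
      and "{x. (x, v) \<in> {(g, p), (p, a), (p, b)}} = (if v = a then {p} else {})"
      using v n d(1) by auto
    then show "card {x. (x, v) \<in> {(g, a)}} = card {x. (x, v) \<in> {(g, p), (p, a), (p, b)}}" by simp
  qed simp
  show "outdeg (A - {(g, p), (p, a), (p, b)} \<union> {(g, a)}) v = outdeg A v"
  proof (rule outdeg_Diff_Un[OF rooted_network_finite_arcs[OF N] removed added])
    have "{x. (v, x) \<in> {(g, a)}} = (if v = g then {a} else {})"
      and "{x. (v, x) \<in> {(g, p), (p, a), (p, b)}} = (if v = g then {p} else {})"
      using v n by auto
    then show "card {x. (v, x) \<in> {(g, a)}} = card {x. (v, x) \<in> {(g, p), (p, a), (p, b)}}" by simp
  qed simp
qed blast

lemma rooted_network_ret_cherry_reduct: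
  assumes N: "rooted_network V A r" and c: "ret_cherry_at V A a b pa pb ga q"
  shows "rooted_network (V - {pa, pb})
    (A - {(ga, pa), (pa, a), (pa, pb), (q, pb), (pb, b)} \<union> {(ga, a), (q, b)}) r"
proof (rule rooted_network_degree_preserving[OF N])
  note d = ret_cherry_atD[OF c] and n = ret_cherry_at_distinct[OF c]
  have removed: "{(ga, pa), (pa, a), (pa, pb), (q, pb), (pb, b)} \<subseteq> A" using d by simp
  have added: "{(ga, a), (q, b)} \<inter> A = {}" using d(8,9,13) n by auto
  have "ga \<in> V" "q \<in> V" using d(11,12) rooted_networkD(2)[OF N] by blast+
  then show "A - {(ga, pa), (pa, a), (pa, pb), (q, pb), (pb, b)} \<union> {(ga, a), (q, b)}
      \<subseteq> (V - {pa, pb}) \<times> (V - {pa, pb})"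
    using rooted_networkD(2)[OF N] d n by auto
  have "(ga, a) \<in> A\<^sup>+" "(q, b) \<in> A\<^sup>+" using removed by (meson insert_subset trancl.simps)+
  then show "A - {(ga, pa), (pa, a), (pa, pb), (q, pb), (pb, b)} \<union> {(ga, a), (q, b)} \<subseteq> A\<^sup>+"
    by auto
  show "r \<in> V - {pa, pb}"
    using rooted_networkD(4)[OF N] rooted_network_root_no_parent[OF N] d(11)[of ga] d(12)[of q]
    by auto
  fix v assume v: "v \<in> V - {pa, pb}"
  show "indeg (A - {(ga, pa), (pa, a), (pa, pb), (q, pb), (pb, b)} \<union> {(ga, a), (q, b)}) v = indeg A v"
  proof (rule indeg_Diff_Un[OF rooted_network_finite_arcs[OF N] removed added])
    have "{x. (x, v) \<in> {(ga, a), (q, b)}} = (if v = a then {ga} else if v = b then {q} else {})"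
      and "{x. (x, v) \<in> {(ga, pa), (pa, a), (pa, pb), (q, pb), (pb, b)}} =
        (if v = a then {pa} else if v = b then {pb} else {})"
      using v n d(1) by auto
    then show "card {x. (x, v) \<in> {(ga, a), (q, b)}} =
        card {x. (x, v) \<in> {(ga, pa), (pa, a), (pa, pb), (q, pb), (pb, b)}}" by simp
  qed simp
  show "outdeg (A - {(ga, pa), (pa, a), (pa, pb), (q, pb), (pb, b)} \<union> {(ga, a), (q, b)}) v = outdeg A v"
  proof (rule outdeg_Diff_Un[OF rooted_network_finite_arcs[OF N] removed added])
    have "{x. (v, x) \<in> {(ga, a), (q, b)}} = (if v = ga then {a} else {}) \<union> (if v = q then {b} else {})"
      and "{x. (v, x) \<in> {(ga, pa), (pa, a), (pa, pb), (q, pb), (pb, b)}} =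
        (if v = ga then {pa} else {}) \<union> (if v = q then {pb} else {})"
      using v by auto
    then show "card {x. (v, x) \<in> {(ga, a), (q, b)}} =
        card {x. (v, x) \<in> {(ga, pa), (pa, a), (pa, pb), (q, pb), (pb, b)}}"
      using n d(1) by auto
  qed simp
qed blast

lemma cherry_reduction_phylo_network:
  assumes "phylo_network N" "cherry_reduction N N'"
  shows "phylo_network N'"
  using assms(1)
proof (cases rule: phylo_network_cases)
  case (single_vertex x)
  then show ?thesis using assms(2) single_vertex_irreducible by metis
next
  case (rooted V A r)
  from rooted(2) assms(2)[unfolded rooted(1)] show ?thesis
  proof (cases rule: cherry_reduction_cases)
    case (cherry a b p g)
    then show ?thesis
      using rooted_network_cherry_reduct[OF rooted(2) cherry(1)]
      unfolding cherry_reduct_def by (auto simp: phylo_network_iff)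
  next
    case (ret_cherry a b pa pb ga q)
    then show ?thesis
      using rooted_network_ret_cherry_reduct[OF rooted(2) ret_cherry(1)]
      unfolding ret_cherry_reduct_def by (auto simp: phylo_network_iff)
  next
    case root_cherry
    then show ?thesis by (simp add: phylo_network_iff)
  qed
qed

section \<open>Local confluence up to relabelling\<close>

definition relabel :: "('v \<Rightarrow> 'v) \<Rightarrow> 'v network \<Rightarrow> 'v network" where
  "relabel f N = (f ` fst N, map_prod f f ` snd N)"

lemma arc_Diff_Un_iff:
  assumes "\<And>x y. (x, y) \<in> R \<union> I \<Longrightarrow> x \<notin> S \<and> y \<notin> S" "x \<in> S \<or> y \<in> S"
  shows "(x, y) \<in> A - R \<union> I \<longleftrightarrow> (x, y) \<in> A"
  using assms by blast

lemma cherry_at_cong: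
  assumes "cherry_at V A a b p g" "{a, b, p} \<subseteq> V'"
    and "\<And>x y. x \<in> {a, b, p} \<or> y \<in> {a, b, p} \<Longrightarrow> (x, y) \<in> A' \<longleftrightarrow> (x, y) \<in> A"
  shows "cherry_at V' A' a b p g"
  unfolding cherry_at_def
proof (intro conjI allI)
  note d = cherry_atD[OF assms(1)]
  show "a \<noteq> b" by (rule d(1))
  show "a \<in> V'" "b \<in> V'" "p \<in> V'" using assms(2) by auto
  fix w
  show "(a, w) \<notin> A'" using assms(3)[of a w] d(5) by simp
  show "(b, w) \<notin> A'" using assms(3)[of b w] d(6) by simp
  show "(w, a) \<in> A' \<longleftrightarrow> w = p" using assms(3)[of w a] d(7) by simp
  show "(w, b) \<in> A' \<longleftrightarrow> w = p" using assms(3)[of w b] d(8) by simp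
  show "(p, w) \<in> A' \<longleftrightarrow> w = a \<or> w = b" using assms(3)[of p w] d(9) by simp
  show "(w, p) \<in> A' \<longleftrightarrow> w = g" using assms(3)[of w p] d(10) by simp
qed

lemma ret_cherry_at_cong:
  assumes "ret_cherry_at V A a b pa pb ga q" "{a, b, pa, pb} \<subseteq> V'"
    and "\<And>x y. x \<in> {a, b, pa, pb} \<or> y \<in> {a, b, pa, pb} \<Longrightarrow> (x, y) \<in> A' \<longleftrightarrow> (x, y) \<in> A"
  shows "ret_cherry_at V' A' a b pa pb ga q"
  unfolding ret_cherry_at_def
proof (intro conjI allI)
  note d = ret_cherry_atD[OF assms(1)]
  show "a \<noteq> b" by (rule d(1))
  show "pa \<noteq> q" by (rule d(13))
  show "a \<in> V'" "b \<in> V'" "pa \<in> V'" "pb \<in> V'" using assms(2) by auto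
  fix w
  show "(a, w) \<notin> A'" using assms(3)[of a w] d(6) by simp
  show "(b, w) \<notin> A'" using assms(3)[of b w] d(7) by simp
  show "(w, a) \<in> A' \<longleftrightarrow> w = pa" using assms(3)[of w a] d(8) by simp
  show "(w, b) \<in> A' \<longleftrightarrow> w = pb" using assms(3)[of w b] d(9) by simp
  show "(pa, w) \<in> A' \<longleftrightarrow> w = a \<or> w = pb" using assms(3)[of pa w] d(10) by simp
  show "(w, pa) \<in> A' \<longleftrightarrow> w = ga" using assms(3)[of w pa] d(11) by simp
  show "(w, pb) \<in> A' \<longleftrightarrow> w = pa \<or> w = q" using assms(3)[of w pb] d(12) by simp
  show "(pb, w) \<in> A' \<longleftrightarrow> w = b" using assms(3)[of pb w] d(14) by simp
qed

lemma map_prod_transpose_mem_iff: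
  "(x, y) \<in> map_prod (transpose a b) (transpose a b) ` S \<longleftrightarrow> (transpose a b x, transpose a b y) \<in> S"
proof
  assume "(x, y) \<in> map_prod (transpose a b) (transpose a b) ` S"
  then show "(transpose a b x, transpose a b y) \<in> S" by auto
next
  assume "(transpose a b x, transpose a b y) \<in> S"
  then have "map_prod (transpose a b) (transpose a b) (transpose a b x, transpose a b y)
      \<in> map_prod (transpose a b) (transpose a b) ` S" by (rule imageI)
  then show "(x, y) \<in> map_prod (transpose a b) (transpose a b) ` S" by simp
qed

lemma transpose_image_mem_iff: "x \<in> transpose a b ` S \<longleftrightarrow> transpose a b x \<in> S"
  by (metis image_iff transpose_involutory)

lemma cherry_reduct_swap:
  assumes c: "cherry_at V A a b p g"
  shows "cherry_reduct V A b a p g = relabel (transpose a b) (cherry_reduct V A a b p g)"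
proof -
  note d = cherry_atD[OF c] and n = cherry_at_distinct[OF c]
  have "V - {a, p} = transpose a b ` (V - {b, p})"
    unfolding set_eq_iff transpose_image_mem_iff using d(1-3) n by (auto simp: transpose_def)
  moreover have "A - {(g, p), (p, b), (p, a)} \<union> {(g, b)} =
      map_prod (transpose a b) (transpose a b) ` (A - {(g, p), (p, a), (p, b)} \<union> {(g, a)})"
  proof -
    have "(x, y) \<in> A - {(g, p), (p, b), (p, a)} \<union> {(g, b)} \<longleftrightarrow>
        (transpose a b x, transpose a b y) \<in> A - {(g, p), (p, a), (p, b)} \<union> {(g, a)}" for x y
      using d n by (auto simp: transpose_def)
    then show ?thesis unfolding set_eq_iff split_paired_All map_prod_transpose_mem_iff by blast
  qed
  ultimately show ?thesis unfolding cherry_reduct_def relabel_def by simp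
qed

definition joinable :: "'v network \<Rightarrow> 'v network \<Rightarrow> bool" where
  "joinable M N \<longleftrightarrow> (\<exists>L. cherry_reduction M L \<and> cherry_reduction N L)"

lemma relabel_id: "relabel id N = N"
  unfolding relabel_def by (simp add: map_prod.id)

lemma cherry_cherry_joinable:
  assumes c1: "cherry_at V A a b p g" and c2: "cherry_at V A c d p' g'"
  shows "(\<exists>f. bij f \<and> cherry_reduct V A c d p' g' = relabel f (cherry_reduct V A a b p g)) \<or>
    joinable (cherry_reduct V A a b p g) (cherry_reduct V A c d p' g')"
proof (cases "p = p'")
  case True
  note d1 = cherry_atD[OF c1] and d2 = cherry_atD[OF c2]
  have "(p, c) \<in> A" "(p, d) \<in> A" using d2(7,8) True by simp_all
  then have "c = a \<or> c = b" "d = a \<or> d = b" using d1(9) by simp_all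
  moreover have "g' = g" using d1(10)[of g'] d2(10)[of g'] True by simp
  ultimately have "cherry_reduct V A c d p' g' = relabel id (cherry_reduct V A a b p g) \<or>
      cherry_reduct V A c d p' g' = relabel (transpose a b) (cherry_reduct V A a b p g)"
    using d2(1) cherry_reduct_swap[OF c1] True relabel_id by metis
  then show ?thesis by (metis bij_id bij_transpose)
next
  case False
  note d1 = cherry_atD[OF c1] and d2 = cherry_atD[OF c2]
  have arcs1: "(p, a) \<in> A" "(p, b) \<in> A" "(g, p) \<in> A" using d1 by simp_all
  have arcs2: "(p', c) \<in> A" "(p', d) \<in> A" "(g', p') \<in> A" using d2 by simp_all
  have "a \<noteq> c" "a \<noteq> d" "b \<noteq> c" "b \<noteq> d" "a \<noteq> p'" "b \<noteq> p'" "g \<noteq> c" "g \<noteq> d"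
    "p \<noteq> c" "p \<noteq> d" "g' \<noteq> a" "g' \<noteq> b" "g \<noteq> p'" "g' \<noteq> p"
    using arcs1 arcs2 d1(5,6,9) d2(5,6,7,8,9) False by metis+
  note distinct = this False
  txt \<open>Different cherries are vertex-disjoint, so each survives the reduction of the other and
    the two reductions commute.\<close>
  have "cherry_at (V - {b, p}) (A - {(g, p), (p, a), (p, b)} \<union> {(g, a)}) c d p' g'"
    by (rule cherry_at_cong[OF c2]) (use d2(2-4) distinct in \<open>auto intro: arc_Diff_Un_iff\<close>)
  moreover have "cherry_at (V - {d, p'}) (A - {(g', p'), (p', c), (p', d)} \<union> {(g', c)}) a b p g"
    by (rule cherry_at_cong[OF c1]) (use d1(2-4) distinct in \<open>auto intro: arc_Diff_Un_iff\<close>)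
  moreover have "cherry_reduct (V - {b, p}) (A - {(g, p), (p, a), (p, b)} \<union> {(g, a)}) c d p' g' =
      cherry_reduct (V - {d, p'}) (A - {(g', p'), (p', c), (p', d)} \<union> {(g', c)}) a b p g"
    unfolding cherry_reduct_def using distinct by auto
  ultimately show ?thesis unfolding joinable_def cherry_reduct_def[of V]
    using cherry_at_cherry_reduction by metis
qed

lemma cherry_ret_cherry_joinable:
  assumes c1: "cherry_at V A a b p g" and c2: "ret_cherry_at V A c d pc pd gc q"
  shows "joinable (cherry_reduct V A a b p g) (ret_cherry_reduct V A c d pc pd gc q)"
proof -
  note d1 = cherry_atD[OF c1] and d2 = ret_cherry_atD[OF c2]
  have arcs1: "(p, a) \<in> A" "(p, b) \<in> A" "(g, p) \<in> A" using d1 by simp_all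
  have arcs2: "(pc, c) \<in> A" "(pc, pd) \<in> A" "(pd, d) \<in> A" "(gc, pc) \<in> A" "(q, pd) \<in> A"
    using d2 by simp_all
  have basic_distinct: "p \<noteq> pc" "p \<noteq> pd" "a \<noteq> pc" "b \<noteq> pc" "a \<noteq> pd" "b \<noteq> pd"
    "p \<noteq> c" "p \<noteq> d" "g \<noteq> c" "g \<noteq> d" "gc \<noteq> a" "gc \<noteq> b" "q \<noteq> a" "q \<noteq> b"
    using arcs1 arcs2 d1(1,5,6,9) d2(6,7,14) by metis+
  then have "a \<noteq> c" "a \<noteq> d" "b \<noteq> c" "b \<noteq> d" "g \<noteq> pc" "g \<noteq> pd" "gc \<noteq> p" "q \<noteq> p"
    using arcs1 arcs2 d1(9) d2(8,9,10,14) by metis+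
  note distinct = basic_distinct this
  have "ret_cherry_at (V - {b, p}) (A - {(g, p), (p, a), (p, b)} \<union> {(g, a)}) c d pc pd gc q"
    by (rule ret_cherry_at_cong[OF c2]) (use d2(2-5) distinct in \<open>auto intro: arc_Diff_Un_iff\<close>)
  moreover have "cherry_at (V - {pc, pd})
      (A - {(gc, pc), (pc, c), (pc, pd), (q, pd), (pd, d)} \<union> {(gc, c), (q, d)}) a b p g"
    by (rule cherry_at_cong[OF c1]) (use d1(2-4) distinct in \<open>auto intro: arc_Diff_Un_iff\<close>)
  moreover have "ret_cherry_reduct (V - {b, p}) (A - {(g, p), (p, a), (p, b)} \<union> {(g, a)}) c d pc pd gc q =
      cherry_reduct (V - {pc, pd})
        (A - {(gc, pc), (pc, c), (pc, pd), (q, pd), (pd, d)} \<union> {(gc, c), (q, d)}) a b p g"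
    unfolding cherry_reduct_def ret_cherry_reduct_def using distinct by auto
  ultimately show ?thesis unfolding joinable_def cherry_reduct_def[of V] ret_cherry_reduct_def[of V]
    using cherry_at_cherry_reduction ret_cherry_at_cherry_reduction by metis
qed

lemma ret_cherry_ret_cherry_joinable:
  assumes c1: "ret_cherry_at V A a b pa pb ga qb" and c2: "ret_cherry_at V A c d pc pd gc qd"
  shows "ret_cherry_reduct V A c d pc pd gc qd = ret_cherry_reduct V A a b pa pb ga qb \<or>
    joinable (ret_cherry_reduct V A a b pa pb ga qb) (ret_cherry_reduct V A c d pc pd gc qd)"
proof -
  note d1 = ret_cherry_atD[OF c1] and d2 = ret_cherry_atD[OF c2]
    and n1 = ret_cherry_at_distinct[OF c1] and n2 = ret_cherry_at_distinct[OF c2]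
  have arcs1: "(pa, a) \<in> A" "(pa, pb) \<in> A" "(pb, b) \<in> A" "(ga, pa) \<in> A" "(qb, pb) \<in> A"
    using d1 by simp_all
  have arcs2: "(pc, c) \<in> A" "(pc, pd) \<in> A" "(pd, d) \<in> A" "(gc, pc) \<in> A" "(qd, pd) \<in> A"
    using d2 by simp_all
  show ?thesis
  proof (cases "pb = pd")
    case same_ret: True
    have "d = b" using arcs2(3) d1(14) same_ret by simp
    show ?thesis
    proof (cases "pa = pc")
      case True
      have "c = a \<or> c = pb" using arcs2(1) d1(10) True by simp
      moreover have "c \<noteq> pb" using arcs1(3) d2(6) by metis
      moreover have "gc = ga" using arcs2(4) d1(11) True by simp
      moreover have "qd = pa \<or> qd = qb" using arcs2(5) d1(12) same_ret by simp
      ultimately show ?thesis using d2(13) True same_ret \<open>d = b\<close> by auto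
    next
      case False
      txt \<open>Both parents of the reticulation carry a leaf: cutting either arc leaves a cherry
        \<open>{a, b}\<close> or \<open>{c, b}\<close>, and reducing \<open>b\<close> from it gives the same network.\<close>
      have "pc = qb" using arcs2(2) d1(12) same_ret False by simp
      have "pa = qd" using arcs1(2) d2(12) same_ret False by simp
      have "a \<noteq> c" using arcs1(1) d2(8) False by metis
      moreover have "ga \<noteq> pc" using arcs1(4,1) d2(10,6) n1(5) same_ret by metis
      moreover have "gc \<noteq> pa" using arcs2(4,1) d1(10,6) n2(5) same_ret by metis
      moreover have "ga \<noteq> c" "gc \<noteq> a" "pc \<noteq> a" "pc \<noteq> b" "pa \<noteq> c"
        using arcs1 arcs2 d1(6,7) d2(6) by metis+
      ultimately have distinct: "a \<noteq> c" "ga \<noteq> pc" "gc \<noteq> pa" "ga \<noteq> c" "gc \<noteq> a" "pc \<noteq> a" "pc \<noteq> b"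
        "pa \<noteq> c" "c \<noteq> b" "pc \<noteq> pb"
        using d2(1) n2(5) \<open>d = b\<close> same_ret by auto
      have "cherry_at (V - {pa, pb})
          (A - {(ga, pa), (pa, a), (pa, pb), (pc, pb), (pb, b)} \<union> {(ga, a), (pc, b)}) c b pc gc"
        unfolding cherry_at_def using d1 d2 distinct n1 n2 \<open>d = b\<close> same_ret False by auto
      moreover have "cherry_at (V - {pc, pb})
          (A - {(gc, pc), (pc, c), (pc, pb), (pa, pb), (pb, b)} \<union> {(gc, c), (pa, b)}) a b pa ga"
        unfolding cherry_at_def using d1 d2 distinct n1 n2 \<open>d = b\<close> same_ret False by auto
      moreover have
        "cherry_reduct (V - {pa, pb})
           (A - {(ga, pa), (pa, a), (pa, pb), (pc, pb), (pb, b)} \<union> {(ga, a), (pc, b)}) c b pc gc =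
         cherry_reduct (V - {pc, pb})
           (A - {(gc, pc), (pc, c), (pc, pb), (pa, pb), (pb, b)} \<union> {(gc, c), (pa, b)}) a b pa ga"
        unfolding cherry_reduct_def using distinct n1 d1(9) False by auto
      ultimately show ?thesis
        unfolding joinable_def ret_cherry_reduct_def \<open>pc = qb\<close>[symmetric] \<open>pa = qd\<close>[symmetric]
          \<open>d = b\<close> same_ret[symmetric]
        using cherry_at_cherry_reduction by metis
    qed
  next
    case False
    have parents_distinct: "pa \<noteq> pc" "pa \<noteq> pd" "pb \<noteq> pc"
      using arcs1(1,2) arcs2(1,2,3) d1(6,10,14) d2(14) n1(2) n2(2) False by metis+
    have leaves_distinct: "a \<noteq> pc" "a \<noteq> pd" "b \<noteq> pc" "b \<noteq> pd" "c \<noteq> pa" "c \<noteq> pb" "d \<noteq> pa"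
      "d \<noteq> pb" "ga \<noteq> c" "ga \<noteq> d" "qb \<noteq> c" "qb \<noteq> d" "gc \<noteq> a" "gc \<noteq> b" "qd \<noteq> a" "qd \<noteq> b"
      using arcs1 arcs2 d1(6,7) d2(6,7) by metis+
    with parents_distinct have "a \<noteq> c" "a \<noteq> d" "b \<noteq> c" "b \<noteq> d" "ga \<noteq> pc" "ga \<noteq> pd"
      "qb \<noteq> pc" "qb \<noteq> pd" "gc \<noteq> pa" "gc \<noteq> pb" "qd \<noteq> pa" "qd \<noteq> pb"
      using arcs1 arcs2 d1(8,9,10,14) d2(8,9,10,14) False by metis+
    note distinct = parents_distinct leaves_distinct this False
    have "ret_cherry_at (V - {pa, pb})
        (A - {(ga, pa), (pa, a), (pa, pb), (qb, pb), (pb, b)} \<union> {(ga, a), (qb, b)}) c d pc pd gc qd"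
      by (rule ret_cherry_at_cong[OF c2]) (use d2(2-5) distinct in \<open>auto intro: arc_Diff_Un_iff\<close>)
    moreover have "ret_cherry_at (V - {pc, pd})
        (A - {(gc, pc), (pc, c), (pc, pd), (qd, pd), (pd, d)} \<union> {(gc, c), (qd, d)}) a b pa pb ga qb"
      by (rule ret_cherry_at_cong[OF c1]) (use d1(2-5) distinct in \<open>auto intro: arc_Diff_Un_iff\<close>)
    moreover have
      "ret_cherry_reduct (V - {pa, pb})
         (A - {(ga, pa), (pa, a), (pa, pb), (qb, pb), (pb, b)} \<union> {(ga, a), (qb, b)}) c d pc pd gc qd =
       ret_cherry_reduct (V - {pc, pd})
         (A - {(gc, pc), (pc, c), (pc, pd), (qd, pd), (pd, d)} \<union> {(gc, c), (qd, d)}) a b pa pb ga qb"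
      unfolding ret_cherry_reduct_def using distinct by auto
    ultimately show ?thesis unfolding joinable_def ret_cherry_reduct_def[of V]
      using ret_cherry_at_cherry_reduction by metis
  qed
qed

lemma joinable_sym: "joinable M N \<Longrightarrow> joinable N M"
  unfolding joinable_def by blast

lemma root_cherry_no_cherry_at:
  assumes "A = {(r, a), (r, b)}" "r \<noteq> a" "r \<noteq> b"
  shows "\<not> cherry_at V A c d p g"
proof
  assume cherry: "cherry_at V A c d p g"
  have "(g, p) \<in> A" "(p, c) \<in> A" using cherry_atD(7,10)[OF cherry] by simp_all
  then show False using assms by auto
qed

lemma root_cherry_no_ret_cherry_at:
  assumes "A = {(r, a), (r, b)}"
  shows "\<not> ret_cherry_at V A c d pc pd gc q"
proof
  assume cherry: "ret_cherry_at V A c d pc pd gc q"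
  have "(pc, pd) \<in> A" "(q, pd) \<in> A" "pc \<noteq> q" using ret_cherry_atD(12,13)[OF cherry] by simp_all
  then show False using assms by auto
qed

lemma cherry_reduction_local_confluence:
  assumes N: "rooted_network V A r"
    and M: "cherry_reduction (V, A) M" and N': "cherry_reduction (V, A) N'"
  shows "(\<exists>f. bij f \<and> N' = relabel f M) \<or> joinable M N'"
  using N M
proof (cases rule: cherry_reduction_cases)
  case (cherry a b p g)
  note M_cherry = this
  from N N' show ?thesis
  proof (cases rule: cherry_reduction_cases)
    case (cherry c d p' g')
    then show ?thesis using cherry_cherry_joinable[OF M_cherry(1) cherry(1)] M_cherry(2) by simp
  next
    case (ret_cherry c d pc pd gc q)
    then show ?thesis using cherry_ret_cherry_joinable[OF M_cherry(1) ret_cherry(1)] M_cherry(2) by simp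
  next
    case root_cherry
    then show ?thesis using root_cherry_no_cherry_at[OF root_cherry(5,1,2)] M_cherry(1) by blast
  qed
next
  case (ret_cherry a b pa pb ga q)
  note M_ret_cherry = this
  from N N' show ?thesis
  proof (cases rule: cherry_reduction_cases)
    case (cherry c d p' g')
    then show ?thesis
      using joinable_sym[OF cherry_ret_cherry_joinable[OF cherry(1) M_ret_cherry(1)]] M_ret_cherry(2)
      by simp
  next
    case (ret_cherry c d pc pd gc q')
    then have "N' = relabel id M \<or> joinable M N'"
      using ret_cherry_ret_cherry_joinable[OF M_ret_cherry(1) ret_cherry(1)] M_ret_cherry(2)
      by (simp add: relabel_id)
    then show ?thesis using bij_id by blast
  next
    case root_cherry
    then show ?thesis using root_cherry_no_ret_cherry_at[OF root_cherry(5)] M_ret_cherry(1) by blast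
  qed
next
  case (root_cherry a b)
  note M_root = this
  from N N' show ?thesis
  proof (cases rule: cherry_reduction_cases)
    case (cherry c d p' g')
    then show ?thesis using root_cherry_no_cherry_at[OF M_root(5,1,2)] cherry(1) by blast
  next
    case (ret_cherry c d pc pd gc q)
    then show ?thesis using root_cherry_no_ret_cherry_at[OF M_root(5)] ret_cherry(1) by blast
  next
    case (root_cherry c d)
    have "N' = relabel (transpose a c) M" using root_cherry(6) M_root(6) unfolding relabel_def by simp
    then show ?thesis using bij_transpose[of a c] by blast
  qed
qed

lemma map_prod_image_mem_iff: "inj f \<Longrightarrow> (f x, f y) \<in> map_prod f f ` A \<longleftrightarrow> (x, y) \<in> A"
  using inj_image_mem_iff[OF prod.inj_map, of f f "(x, y)" A] by simp

lemma surj_allI: "surj f \<Longrightarrow> (\<And>x. P (f x)) \<Longrightarrow> \<forall>y. P y"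
  by (metis surjD)

lemma cherry_at_relabel:
  assumes "bij f" "cherry_at V A a b p g"
  shows "cherry_at (f ` V) (map_prod f f ` A) (f a) (f b) (f p) (f g)"
  unfolding cherry_at_def
  by (intro conjI surj_allI[OF bij_is_surj[OF assms(1)]])
    (use cherry_atD[OF assms(2)] bij_is_inj[OF assms(1)] in
      \<open>simp_all add: map_prod_image_mem_iff inj_eq inj_image_mem_iff\<close>)

lemma ret_cherry_at_relabel:
  assumes "bij f" "ret_cherry_at V A a b pa pb ga q"
  shows "ret_cherry_at (f ` V) (map_prod f f ` A) (f a) (f b) (f pa) (f pb) (f ga) (f q)"
  unfolding ret_cherry_at_def
  by (intro conjI surj_allI[OF bij_is_surj[OF assms(1)]])
    (use ret_cherry_atD[OF assms(2)] bij_is_inj[OF assms(1)] in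
      \<open>simp_all add: map_prod_image_mem_iff inj_eq inj_image_mem_iff\<close>)

lemma relabel_cherry_reduct:
  "inj f \<Longrightarrow> relabel f (cherry_reduct V A a b p g) =
    cherry_reduct (f ` V) (map_prod f f ` A) (f a) (f b) (f p) (f g)"
  unfolding relabel_def cherry_reduct_def by (simp add: image_set_diff image_Un prod.inj_map)

lemma relabel_ret_cherry_reduct:
  "inj f \<Longrightarrow> relabel f (ret_cherry_reduct V A a b pa pb ga q) =
    ret_cherry_reduct (f ` V) (map_prod f f ` A) (f a) (f b) (f pa) (f pb) (f ga) (f q)"
  unfolding relabel_def ret_cherry_reduct_def by (simp add: image_set_diff image_Un prod.inj_map)

lemma relabel_cherry_reduction:
  assumes f: "bij f" and "phylo_network N" "cherry_reduction N N'"
  shows "cherry_reduction (relabel f N) (relabel f N')"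
  using assms(2)
proof (cases rule: phylo_network_cases)
  case (single_vertex x)
  then show ?thesis using assms(3) single_vertex_irreducible by metis
next
  case (rooted V A r)
  have N: "relabel f N = (f ` V, map_prod f f ` A)" unfolding rooted(1) relabel_def by simp
  from rooted(2) assms(3)[unfolded rooted(1)] show ?thesis
  proof (cases rule: cherry_reduction_cases)
    case (cherry a b p g)
    then show ?thesis unfolding N
      using cherry_at_cherry_reduction[OF cherry_at_relabel[OF f]] relabel_cherry_reduct[OF bij_is_inj[OF f]]
      by simp
  next
    case (ret_cherry a b pa pb ga q)
    then show ?thesis unfolding N
      using ret_cherry_at_cherry_reduction[OF ret_cherry_at_relabel[OF f]]
        relabel_ret_cherry_reduct[OF bij_is_inj[OF f]]
      by simp
  next
    case (root_cherry a b)
    then have "f r \<noteq> f a" "f r \<noteq> f b" "f a \<noteq> f b"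
      using bij_is_inj[OF f] by (simp_all add: inj_eq)
    moreover have "relabel f N = ({f r, f a, f b}, {(f r, f a), (f r, f b)})"
      using N root_cherry(4,5) by simp
    moreover have "relabel f N' = ({f a}, {})" unfolding root_cherry(6) relabel_def by simp
    ultimately show ?thesis using cherry_reduction_root_cherry[of "f r" "f a" "f b"] by simp
  qed
qed

lemma cherry_reduction_seq_phylo_network:
  assumes "phylo_network N" "cherry_reduction_seq N Ns k" "i \<le> k"
  shows "phylo_network (Ns i)"
  using assms(3)
proof (induction i)
  case 0
  then show ?case using assms(1,2) unfolding cherry_reduction_seq_def by simp
next
  case (Suc i)
  then have "phylo_network (Ns i)" by simp
  moreover have "cherry_reduction (Ns i) (Ns (Suc i))"
    using assms(2) Suc.prems unfolding cherry_reduction_seq_def by simp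
  ultimately show ?case by (rule cherry_reduction_phylo_network)
qed

lemma complete_seq_relabel:
  assumes f: "bij f" and "phylo_network N" "complete_seq N Ns k"
  shows "complete_seq (relabel f N) (relabel f \<circ> Ns) k"
proof -
  have seq: "cherry_reduction_seq N Ns k" and "single_vertex (Ns k)"
    using assms(3) unfolding complete_seq_def by simp_all
  then obtain v where "Ns k = ({v}, {})" unfolding single_vertex_def by blast
  then have "single_vertex (relabel f (Ns k))" unfolding single_vertex_def relabel_def by simp
  moreover have "cherry_reduction (relabel f (Ns i)) (relabel f (Ns (Suc i)))" if "i < k" for i
    using relabel_cherry_reduction[OF f cherry_reduction_seq_phylo_network[OF assms(2) seq]] seq that
    unfolding cherry_reduction_seq_def by simp
  ultimately show ?thesis using seq unfolding complete_seq_def cherry_reduction_seq_def by simp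
qed

section \<open>Cherry reductions of orchard networks\<close>

lemma complete_seq_0: "complete_seq N Ns 0 \<Longrightarrow> single_vertex N"
  unfolding complete_seq_def cherry_reduction_seq_def by blast

lemma single_vertex_not_cherry_reduction: "single_vertex N \<Longrightarrow> \<not> cherry_reduction N N'"
  unfolding single_vertex_def using single_vertex_irreducible by metis

lemma complete_seq_Suc:
  "complete_seq N Ns (Suc k) \<Longrightarrow> cherry_reduction N (Ns 1) \<and> complete_seq (Ns 1) (Ns \<circ> Suc) k"
  unfolding complete_seq_def cherry_reduction_seq_def by force

lemma complete_seq_Cons:
  assumes "cherry_reduction N M" "complete_seq M Ms k"
  shows "complete_seq N (case_nat N Ms) (Suc k)"
  using assms unfolding complete_seq_def cherry_reduction_seq_def by (auto simp: less_Suc_eq_0_disj)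

lemma complete_seq_cherry_reduction:
  "phylo_network N \<Longrightarrow> complete_seq N Ns k \<Longrightarrow> cherry_reduction N N' \<Longrightarrow>
    \<exists>Ns'. complete_seq N' Ns' (k - 1)"
proof (induction k arbitrary: N Ns N')
  case 0
  then show ?case using complete_seq_0 single_vertex_not_cherry_reduction by blast
next
  case (Suc k)
  define M where "M = Ns 1"
  have NM: "cherry_reduction N M" and M: "complete_seq M (Ns \<circ> Suc) k"
    using complete_seq_Suc[OF Suc.prems(2)] unfolding M_def by simp_all
  have "phylo_network M" using cherry_reduction_phylo_network[OF Suc.prems(1) NM] .
  obtain V A r where N: "N = (V, A)" "rooted_network V A r"
    using Suc.prems(1)
  proof (cases rule: phylo_network_cases)
    case (single_vertex x)
    then show ?thesis using Suc.prems(3) single_vertex_irreducible by metis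
  qed
  from cherry_reduction_local_confluence[OF N(2), folded N(1), OF NM Suc.prems(3)]
  show ?case
  proof (elim disjE exE conjE)
    fix f assume "bij f" "N' = relabel f M"
    then show ?case using complete_seq_relabel[OF _ \<open>phylo_network M\<close> M] by auto
  next
    assume "joinable M N'"
    then obtain L where M_L: "cherry_reduction M L" and N'_L: "cherry_reduction N' L"
      unfolding joinable_def by blast
    obtain Ls where "complete_seq L Ls (k - 1)" using Suc.IH[OF \<open>phylo_network M\<close> M M_L] by blast
    moreover have "k \<noteq> 0" using M M_L complete_seq_0 single_vertex_not_cherry_reduction by metis
    ultimately show ?case using complete_seq_Cons[OF N'_L] by (metis Suc_diff_1 diff_Suc_1 gr0I)
  qed
qed

lemma orchard_cherry_reduction: "orchard N \<Longrightarrow> cherry_reduction N N' \<Longrightarrow> orchard N'"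
  unfolding orchard_def using cherry_reduction_phylo_network complete_seq_cherry_reduction by blast

lemma orchard_cherry_reduction_seq:
  assumes "orchard N" "cherry_reduction_seq N Ns l" "i \<le> l"
  shows "orchard (Ns i)"
  using assms(3)
proof (induction i)
  case 0
  then show ?case using assms(1,2) unfolding cherry_reduction_seq_def by simp
next
  case (Suc i)
  then have "orchard (Ns i)" by simp
  moreover have "cherry_reduction (Ns i) (Ns (Suc i))"
    using assms(2) Suc.prems unfolding cherry_reduction_seq_def by simp
  ultimately show ?case by (rule orchard_cherry_reduction)
qed

lemma orchard_no_cherries_single_vertex:
  assumes "orchard N" "no_cherries N"
  shows "single_vertex N"
proof -
  obtain Ns k where "complete_seq N Ns k" using assms(1) unfolding orchard_def by blast
  moreover have "\<not> cherry_reduction N N'" for N'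
    using assms(2) unfolding no_cherries_def cherry_reduction_def by blast
  ultimately show ?thesis using complete_seq_0 complete_seq_Suc by (cases k) blast+
qed

theorem proposition4p1:
  fixes N :: "'v network" and Ns :: "nat \<Rightarrow> 'v network" and l :: nat
  assumes "orchard N"
    and "maximal_seq N Ns l"
  shows "complete_seq N Ns l"
proof -
  have seq: "cherry_reduction_seq N Ns l" and "no_cherries (Ns l)"
    using assms(2) unfolding maximal_seq_def by simp_all
  have "orchard (Ns l)" using orchard_cherry_reduction_seq[OF assms(1) seq] by simp
  then have "single_vertex (Ns l)" using orchard_no_cherries_single_vertex \<open>no_cherries (Ns l)\<close> by blast
  then show ?thesis using seq unfolding complete_seq_def by simp
qed

end
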